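(* Let $d\ge1$, let $H$ be a hypergraph of $d$-intervals and let $w$ be a weight system on $H$. Then $\tau^*_w(H)\le 2d\,\nu_w(H)$.
   Context: A $d$-interval is a union of at most $d$ pairwise disjoint closed intervals of the real line $\mathbb{R}$. A hypergraph of $d$-intervals is a finite family $H$ of $d$-intervals, regarded as a hypergraph whose vertices are the points of $\mathbb{R}$ and whose edges are the members of $H$. A matching is a set of pairwise disjoint edges. A weight system on $H$ is a function $w:H\to\mathbb{N}$. $\nu_w(H)$ is the maximum of $\sum_{h\in M}w(h)$ over all matchings $M\subseteq H$. A fractional $w$-cover is a finitely supported function $g:\mathbb{R}\to\mathbb{R}_{\ge0}$ with $\sum_{v\in h}g(v)\ge w(h)$ for every $h\in H$; $\tau^*_w(H)$ is the infimum of $\sum_v g(v)$ over all fractional $w$-covers (equivalently, by LP duality, the supremum of $\sum_{h\in H}w(h)f(h)$ over all $f:H\to\mathbb{R}_{\ge0}$ with $\sum_{h\ni v}f(h)\le1$ for every point $v$). *)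

theory Defs
  imports Complex_Main
begin

definition d_interval :: "nat \<Rightarrow> real set \<Rightarrow> bool" where
  "d_interval d S \<longleftrightarrow>
     (\<exists>ivs :: (real \<times> real) list.
        1 \<le> length ivs \<and> length ivs \<le> d \<and>
        (\<forall>i < length ivs. fst (ivs ! i) \<le> snd (ivs ! i)) \<and>
        (\<forall>i < length ivs. \<forall>j < length ivs. i \<noteq> j \<longrightarrow>
            {fst (ivs ! i) .. snd (ivs ! i)} \<inter> {fst (ivs ! j) .. snd (ivs ! j)} = {}) \<and>
        S = (\<Union>i < length ivs. {fst (ivs ! i) .. snd (ivs ! i)}))"

text \<open>A hypergraph is a finite family of edges, indexed by a finite set H with edge map E.
  A matching is a set of members with pairwise disjoint edges.\<close>
definition matching :: "('h \<Rightarrow> real set) \<Rightarrow> 'h set \<Rightarrow> 'h set \<Rightarrow> bool" where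
  "matching E H M \<longleftrightarrow> M \<subseteq> H \<and> (\<forall>h\<in>M. \<forall>h'\<in>M. h \<noteq> h' \<longrightarrow> E h \<inter> E h' = {})"

definition nu_w :: "('h \<Rightarrow> real set) \<Rightarrow> 'h set \<Rightarrow> ('h \<Rightarrow> nat) \<Rightarrow> nat" where
  "nu_w E H w = Max ((\<lambda>M. \<Sum>h\<in>M. w h) ` {M. matching E H M})"

definition frac_cover :: "('h \<Rightarrow> real set) \<Rightarrow> 'h set \<Rightarrow> ('h \<Rightarrow> nat) \<Rightarrow> (real \<Rightarrow> real) \<Rightarrow> bool" where
  "frac_cover E H w g \<longleftrightarrow>
     finite {v. g v \<noteq> 0} \<and> (\<forall>v. 0 \<le> g v) \<and>
     (\<forall>h\<in>H. (\<Sum>v\<in>E h \<inter> {v. g v \<noteq> 0}. g v) \<ge> real (w h))"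

definition tau_star_w :: "('h \<Rightarrow> real set) \<Rightarrow> 'h set \<Rightarrow> ('h \<Rightarrow> nat) \<Rightarrow> real" where
  "tau_star_w E H w = Inf ((\<lambda>g. \<Sum>v\<in>{v. g v \<noteq> 0}. g v) ` {g. frac_cover E H w g})"

end

theory Submission
  imports Defs
begin

(* Let P be the finite set of left endpoints of all edges. Any two meeting d-intervals
   contain a left endpoint of one another ("crossing property"). The proof has two parts.
   (1) Linear programming: Farkas' lemma for finite systems A x <= b, proved by
       Fourier-Motzkin elimination on the cone of derived rows, applied to the LP of
       covers supported on P. It gives the half of LP duality needed: if every fractional
       packing w.r.t. P (edge weights with total at most 1 at each point of P) has weight
       at most T, then some nonnegative weighting of P of total at most T covers every edge.
   (2) Local ratio: by double counting via the crossing property, some edge in the support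
       of a packing meets edges of total packing weight at most 2d; splitting off its
       weight and recursing yields a matching M with packing weight <= 2d w(M) <= 2d nu_w.
   The theorem combines (1) with T = 2d nu_w and (2), reading the weighting of P as a
   fractional w-cover. *)

definition feasible :: "'i set \<Rightarrow> (('i \<Rightarrow> real) \<times> real) set \<Rightarrow> bool" where
  "feasible I K \<longleftrightarrow> (\<exists>x. \<forall>k\<in>K. (\<Sum>i\<in>I. fst k i * x i) \<le> snd k)"

inductive_set cone :: "(('i \<Rightarrow> real) \<times> real) set \<Rightarrow> (('i \<Rightarrow> real) \<times> real) set" for K where
  cone_zero: "((\<lambda>_. 0), 0) \<in> cone K"
| cone_step: "c \<in> cone K \<Longrightarrow> k \<in> K \<Longrightarrow> t \<ge> 0 \<Longrightarrow>
     ((\<lambda>i. fst c i + t * fst k i), snd c + t * snd k) \<in> cone K"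

lemma cone_base: "k \<in> K \<Longrightarrow> k \<in> cone K"
  using cone_step[OF cone_zero, of k K 1] by simp

lemma cone_add: "c2 \<in> cone K \<Longrightarrow> c1 \<in> cone K \<Longrightarrow>
   ((\<lambda>i. fst c1 i + fst c2 i), snd c1 + snd c2) \<in> cone K"
proof (induction rule: cone.induct)
  case cone_zero then show ?case by simp
next
  case (cone_step c k t)
  have "((\<lambda>i. fst ((\<lambda>i. fst c1 i + fst c i), snd c1 + snd c) i + t * fst k i),
      snd ((\<lambda>i. fst c1 i + fst c i), snd c1 + snd c) + t * snd k) \<in> cone K"
    using cone_step by (intro cone.cone_step) auto
  then show ?case by (simp add: add.assoc)
qed

lemma cone_scale: "c \<in> cone K \<Longrightarrow> s \<ge> 0 \<Longrightarrow> ((\<lambda>i. s * fst c i), s * snd c) \<in> cone K"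
proof (induction rule: cone.induct)
  case cone_zero then show ?case using cone.cone_zero by simp
next
  case (cone_step c k t)
  have "((\<lambda>i. fst ((\<lambda>i. s * fst c i), s * snd c) i + (s*t) * fst k i),
      snd ((\<lambda>i. s * fst c i), s * snd c) + (s*t) * snd k) \<in> cone K"
    using cone_step by (intro cone.cone_step) auto
  then show ?case by (simp add: algebra_simps)
qed

lemma cone_trans: "v \<in> cone K' \<Longrightarrow> K' \<subseteq> cone K \<Longrightarrow> v \<in> cone K"
proof (induction rule: cone.induct)
  case cone_zero then show ?case by (simp add: cone.cone_zero)
next
  case (cone_step c k t)
  have "((\<lambda>i. t * fst k i), t * snd k) \<in> cone K" using cone_step by (intro cone_scale) auto
  from cone_add[OF this] cone_step show ?case by auto
qed

lemma cone_coord_zero: "v \<in> cone K \<Longrightarrow> \<forall>k\<in>K. fst k j = 0 \<Longrightarrow> fst v j = 0"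
  by (induction rule: cone.induct) auto

lemma cone_combination:
  fixes F :: "'s \<Rightarrow> ('i \<Rightarrow> real) \<times> real"
  assumes "v \<in> cone (F ` S)" "finite S"
  shows "\<exists>y. (\<forall>s. y s \<ge> 0) \<and> (\<forall>i. fst v i = (\<Sum>s\<in>S. y s * fst (F s) i))
              \<and> snd v = (\<Sum>s\<in>S. y s * snd (F s))"
  using assms(1)
proof (induction rule: cone.induct)
  case cone_zero
  show ?case by (intro exI[of _ "\<lambda>_. 0"]) simp
next
  case (cone_step c k t)
  then obtain y where y: "\<forall>s. y s \<ge> 0" "\<forall>i. fst c i = (\<Sum>s\<in>S. y s * fst (F s) i)"
    "snd c = (\<Sum>s\<in>S. y s * snd (F s))" by blast
  from cone_step obtain s0 where s0: "s0 \<in> S" "k = F s0" by auto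
  define y' where "y' s = y s + (if s = s0 then t else 0)" for s
  have comb: "(\<Sum>s\<in>S. y' s * G s) = (\<Sum>s\<in>S. y s * G s) + t * G s0" for G :: "'s \<Rightarrow> real"
  proof -
    have "(\<Sum>s\<in>S. y' s * G s) = (\<Sum>s\<in>S. y s * G s + (if s = s0 then t * G s else 0))"
      by (intro sum.cong) (auto simp: y'_def distrib_right)
    also have "\<dots> = (\<Sum>s\<in>S. y s * G s) + t * G s0"
      using s0 assms(2) by (simp add: sum.distrib)
    finally show ?thesis .
  qed
  have "\<forall>s. y' s \<ge> 0" using y(1) cone_step unfolding y'_def by auto
  moreover have "fst c i + t * fst k i = (\<Sum>s\<in>S. y' s * fst (F s) i)" for i
    using comb[of "\<lambda>s. fst (F s) i"] y(2) s0 by simp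
  moreover have "snd c + t * snd k = (\<Sum>s\<in>S. y' s * snd (F s))"
    using comb[of "\<lambda>s. snd (F s)"] y(3) s0 by simp
  ultimately show ?case by (intro exI[of _ y']) simp
qed

text \<open>Fourier--Motzkin elimination of the variable \<open>j\<close>: keep the rows not involving \<open>j\<close>
  and add, for each row with positive and each row with negative \<open>j\<close>-coefficient,
  the combination in which \<open>j\<close> cancels.\<close>
definition fm_combine :: "'i \<Rightarrow> ('i \<Rightarrow> real) \<times> real \<Rightarrow> ('i \<Rightarrow> real) \<times> real \<Rightarrow> ('i \<Rightarrow> real) \<times> real" where
  "fm_combine j p n =
     ((\<lambda>i. (- fst n j) * fst p i + fst p j * fst n i), (- fst n j) * snd p + fst p j * snd n)"

definition fm_elim :: "'i \<Rightarrow> (('i \<Rightarrow> real) \<times> real) set \<Rightarrow> (('i \<Rightarrow> real) \<times> real) set" where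
  "fm_elim j K = {k\<in>K. fst k j = 0} \<union>
     (\<lambda>(p, n). fm_combine j p n) ` ({k\<in>K. fst k j > 0} \<times> {k\<in>K. fst k j < 0})"

lemma fm_elim_finite: "finite K \<Longrightarrow> finite (fm_elim j K)"
  unfolding fm_elim_def by simp

lemma fm_elim_coord: "k \<in> fm_elim j K \<Longrightarrow> fst k j = 0"
  unfolding fm_elim_def fm_combine_def by (auto simp: algebra_simps)

lemma fm_elim_cone: "fm_elim j K \<subseteq> cone K"
proof
  fix k assume "k \<in> fm_elim j K"
  then consider "k \<in> K" | p n where "p \<in> K" "n \<in> K" "fst p j > 0" "fst n j < 0" "k = fm_combine j p n"
    unfolding fm_elim_def by auto
  then show "k \<in> cone K"
  proof cases
    case 1 then show ?thesis by (rule cone_base)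
  next
    case 2
    have a: "((\<lambda>i. (- fst n j) * fst p i), (- fst n j) * snd p) \<in> cone K"
      using 2 by (intro cone_scale cone_base) auto
    have b: "((\<lambda>i. fst p j * fst n i), fst p j * snd n) \<in> cone K"
      using 2 by (intro cone_scale cone_base) auto
    show ?thesis using cone_add[OF b a] 2 unfolding fm_combine_def by simp
  qed
qed

lemma finite_sets_separated:
  fixes A B :: "real set"
  assumes "finite A" "finite B" "\<forall>a\<in>A. \<forall>b\<in>B. a \<le> b"
  shows "\<exists>t. (\<forall>a\<in>A. a \<le> t) \<and> (\<forall>b\<in>B. t \<le> b)"
proof (cases "A = {}")
  case True
  then show ?thesis using assms(2) by (intro exI[of _ "if B = {} then 0 else Min B"]) auto
next
  case False
  then show ?thesis using assms Max_in[OF assms(1) False] by (intro exI[of _ "Max A"]) auto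
qed

text \<open>If \<open>x\<close> satisfies the combination of a row \<open>p\<close> with positive and a row \<open>n\<close> with
  negative \<open>j\<close>-coefficient, then the lower bound for \<open>x j\<close> imposed by \<open>n\<close> lies below
  the upper bound imposed by \<open>p\<close> (both computed from the other variables in \<open>I\<close>).\<close>
lemma fm_combine_bounds:
  assumes "fst p j > 0" "fst n j < 0"
    and "(\<Sum>i\<in>I. fst (fm_combine j p n) i * x i) \<le> snd (fm_combine j p n)"
  shows "(snd n - (\<Sum>i\<in>I. fst n i * x i)) / fst n j \<le> (snd p - (\<Sum>i\<in>I. fst p i * x i)) / fst p j"
proof -
  have "(\<Sum>i\<in>I. fst (fm_combine j p n) i * x i)
      = (- fst n j) * (\<Sum>i\<in>I. fst p i * x i) + fst p j * (\<Sum>i\<in>I. fst n i * x i)"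
  proof -
    have "(\<Sum>i\<in>I. fst (fm_combine j p n) i * x i)
        = (\<Sum>i\<in>I. (- fst n j) * (fst p i * x i) + fst p j * (fst n i * x i))"
      unfolding fm_combine_def by (intro sum.cong) (auto simp: algebra_simps)
    then show ?thesis unfolding sum.distrib sum_distrib_left .
  qed
  then have "(snd p - (\<Sum>i\<in>I. fst p i * x i)) * fst n j \<le> (snd n - (\<Sum>i\<in>I. fst n i * x i)) * fst p j"
    using assms(3) unfolding fm_combine_def by (simp add: algebra_simps)
  then show ?thesis using assms(1,2) by (simp add: divide_simps)
qed

text \<open>Soundness of elimination: a solution of the eliminated system extends to a solution
  of the original one, choosing \<open>x j\<close> between the lower bounds imposed by the rows with
  negative and the upper bounds imposed by the rows with positive \<open>j\<close>-coefficient.\<close>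
lemma fm_elim_feasible:
  assumes "finite K" "finite I" "j \<notin> I" "feasible I (fm_elim j K)"
  shows "feasible (insert j I) K"
proof -
  obtain x where x: "\<forall>k\<in>fm_elim j K. (\<Sum>i\<in>I. fst k i * x i) \<le> snd k"
    using assms(4) unfolding feasible_def by auto
  define s where "s k = (\<Sum>i\<in>I. fst k i * x i)" for k :: "('a \<Rightarrow> real) \<times> real"
  define U where "U k = (snd k - s k) / fst k j" for k
  define Kp where "Kp = {k\<in>K. fst k j > 0}"
  define Kn where "Kn = {k\<in>K. fst k j < 0}"
  have "U n \<le> U p" if p: "p \<in> Kp" and n: "n \<in> Kn" for p n
  proof -
    have "fm_combine j p n \<in> fm_elim j K" using p n unfolding fm_elim_def Kp_def Kn_def by auto
    then show ?thesis
      using fm_combine_bounds[of p j n x I] x p n unfolding U_def s_def Kp_def Kn_def by simp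
  qed
  moreover have "finite (U ` Kn)" "finite (U ` Kp)" using assms(1) unfolding Kp_def Kn_def by auto
  ultimately obtain t where t: "\<forall>n\<in>Kn. U n \<le> t" "\<forall>p\<in>Kp. t \<le> U p"
    using finite_sets_separated[of "U ` Kn" "U ` Kp"] by auto
  have "(\<Sum>i\<in>insert j I. fst k i * (x(j := t)) i) \<le> snd k" if k: "k \<in> K" for k
  proof -
    have eq: "(\<Sum>i\<in>insert j I. fst k i * (x(j := t)) i) = fst k j * t + s k"
      using assms(2,3) unfolding s_def
      by (auto intro!: sum.cong)
    consider "fst k j = 0" | "fst k j > 0" | "fst k j < 0" by linarith
    then show ?thesis
    proof cases
      case 1
      then have "k \<in> fm_elim j K" using k unfolding fm_elim_def by auto
      then show ?thesis using x 1 eq unfolding s_def by simp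
    next
      case 2
      then have "k \<in> Kp" using k unfolding Kp_def by simp
      then have "t \<le> U k" using t by blast
      then show ?thesis using 2 unfolding eq U_def by (simp add: le_divide_eq algebra_simps)
    next
      case 3
      then have "k \<in> Kn" using k unfolding Kn_def by simp
      then have "U k \<le> t" using t by blast
      then show ?thesis using 3 unfolding eq U_def by (simp add: divide_le_eq algebra_simps)
    qed
  qed
  then show ?thesis unfolding feasible_def by blast
qed

lemma infeasible_cone_certificate:
  assumes "finite I" "finite K" "\<not> feasible I K"
  shows "\<exists>v\<in>cone K. (\<forall>i\<in>I. fst v i = 0) \<and> snd v < 0"
  using assms
proof (induction I arbitrary: K rule: finite_induct)
  case empty
  then obtain k where "k \<in> K" "snd k < 0" unfolding feasible_def by force
  then show ?case using cone_base[of k K] by auto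
next
  case (insert j I)
  have "\<not> feasible I (fm_elim j K)"
    using fm_elim_feasible[of K I j] insert.hyps insert.prems by blast
  then obtain v where v: "v \<in> cone (fm_elim j K)" "\<forall>i\<in>I. fst v i = 0" "snd v < 0"
    using insert.IH[OF fm_elim_finite[OF insert.prems(1)]] by blast
  have "fst v j = 0" using cone_coord_zero[OF v(1)] fm_elim_coord by metis
  then show ?case using v cone_trans[OF v(1) fm_elim_cone] by auto
qed

lemma farkas:
  fixes A :: "'s \<Rightarrow> 'i \<Rightarrow> real" and b :: "'s \<Rightarrow> real"
  assumes "finite I" "finite S" "\<not> (\<exists>x. \<forall>s\<in>S. (\<Sum>i\<in>I. A s i * x i) \<le> b s)"
  shows "\<exists>y. (\<forall>s. 0 \<le> y s) \<and> (\<forall>i\<in>I. (\<Sum>s\<in>S. y s * A s i) = 0) \<and> (\<Sum>s\<in>S. y s * b s) < 0"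
proof -
  have "\<not> feasible I ((\<lambda>s. (A s, b s)) ` S)" using assms(3) unfolding feasible_def by auto
  then obtain v where v: "v \<in> cone ((\<lambda>s. (A s, b s)) ` S)" "\<forall>i\<in>I. fst v i = 0" "snd v < 0"
    using infeasible_cone_certificate assms(1,2) by blast
  obtain y where y: "\<forall>s. y s \<ge> 0" "\<forall>i. fst v i = (\<Sum>s\<in>S. y s * A s i)"
    "snd v = (\<Sum>s\<in>S. y s * b s)"
    using cone_combination[OF v(1) assms(2)] by auto
  show ?thesis using y v(2,3) by (intro exI[of _ y]) auto
qed

definition frac_packing :: "('h \<Rightarrow> real set) \<Rightarrow> 'h set \<Rightarrow> real set \<Rightarrow> ('h \<Rightarrow> real) \<Rightarrow> bool" where
  "frac_packing E H P f \<longleftrightarrow>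
     (\<forall>h\<in>H. 0 \<le> f h) \<and> (\<forall>p\<in>P. (\<Sum>h\<in>H. if p \<in> E h then f h else 0) \<le> 1)"

lemma frac_packing_subset:
  assumes "frac_packing E H P f" "finite H" "H' \<subseteq> H"
  shows "frac_packing E H' P f"
  unfolding frac_packing_def
proof (intro conjI ballI)
  fix p assume p: "p \<in> P"
  have "(\<Sum>h\<in>H'. if p \<in> E h then f h else 0) \<le> (\<Sum>h\<in>H. if p \<in> E h then f h else 0)"
    using assms by (intro sum_mono2) (auto simp: frac_packing_def)
  also have "\<dots> \<le> 1" using assms(1) p unfolding frac_packing_def by blast
  finally show "(\<Sum>h\<in>H'. if p \<in> E h then f h else 0) \<le> 1" .
qed (use assms in \<open>auto simp: frac_packing_def\<close>)

text \<open>The linear program for a fractional cover supported on \<open>P\<close> of total at most \<open>T\<close>,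
  in the form \<open>A x \<le> b\<close>: one budget row \<open>\<Sum>p. x p \<le> T\<close>, one covering row
  \<open>- \<Sum>p\<in>E h. x p \<le> - w h\<close> per edge, and one sign row \<open>- x q \<le> 0\<close> per point.\<close>
datatype 'h cover_row = Budget | Edge 'h | Point real

fun row_coeff :: "('h \<Rightarrow> real set) \<Rightarrow> 'h cover_row \<Rightarrow> real \<Rightarrow> real" where
  "row_coeff E Budget p = 1"
| "row_coeff E (Edge h) p = (if p \<in> E h then -1 else 0)"
| "row_coeff E (Point q) p = (if p = q then -1 else 0)"

fun row_bound :: "('h \<Rightarrow> real) \<Rightarrow> real \<Rightarrow> 'h cover_row \<Rightarrow> real" where
  "row_bound w T Budget = T"
| "row_bound w T (Edge h) = - w h"
| "row_bound w T (Point q) = 0"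

definition cover_rows :: "'h set \<Rightarrow> real set \<Rightarrow> 'h cover_row set" where
  "cover_rows H P = insert Budget (Edge ` H \<union> Point ` P)"

lemma sum_cover_rows:
  assumes "finite H" "finite P"
  shows "(\<Sum>s\<in>cover_rows H P. g s) = g Budget + (\<Sum>h\<in>H. g (Edge h)) + (\<Sum>p\<in>P. g (Point p))"
proof -
  have "(\<Sum>s\<in>cover_rows H P. g s) = g Budget + ((\<Sum>s\<in>Edge ` H. g s) + (\<Sum>s\<in>Point ` P. g s))"
  proof -
    have "Edge ` H \<inter> Point ` P = {}" by auto
    then show ?thesis
      using assms sum.union_disjoint[of "Edge ` H" "Point ` P" g] unfolding cover_rows_def
      by (subst sum.insert) auto
  qed
  also have "(\<Sum>s\<in>Edge ` H. g s) = (\<Sum>h\<in>H. g (Edge h))"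
    by (subst sum.reindex) (auto simp: inj_on_def)
  also have "(\<Sum>s\<in>Point ` P. g s) = (\<Sum>p\<in>P. g (Point p))"
    by (subst sum.reindex) (auto simp: inj_on_def)
  finally show ?thesis by (simp add: add.assoc)
qed

lemma cover_rows_solution:
  assumes "finite P" "\<forall>s\<in>cover_rows H P. (\<Sum>p\<in>P. row_coeff E s p * x p) \<le> row_bound w T s"
  shows "(\<forall>p\<in>P. 0 \<le> x p) \<and> (\<forall>h\<in>H. w h \<le> (\<Sum>p\<in>P \<inter> E h. x p)) \<and> (\<Sum>p\<in>P. x p) \<le> T"
proof (intro conjI ballI)
  fix q assume q: "q \<in> P"
  then have "Point q \<in> cover_rows H P" unfolding cover_rows_def by simp
  then have "(\<Sum>p\<in>P. row_coeff E (Point q) p * x p) \<le> 0" using assms(2) by fastforce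
  moreover have "(\<Sum>p\<in>P. row_coeff E (Point q) p * x p) = (\<Sum>p\<in>P. if p = q then - x p else 0)"
    by (intro sum.cong) auto
  ultimately show "0 \<le> x q" using assms(1) q by simp
next
  fix h assume "h \<in> H"
  then have "Edge h \<in> cover_rows H P" unfolding cover_rows_def by simp
  then have "(\<Sum>p\<in>P. row_coeff E (Edge h) p * x p) \<le> - w h" using assms(2) by fastforce
  moreover have "(\<Sum>p\<in>P. row_coeff E (Edge h) p * x p) = - (\<Sum>p\<in>P \<inter> E h. x p)"
    unfolding sum.inter_restrict[OF assms(1)] sum_negf[symmetric] by (intro sum.cong) auto
  ultimately show "w h \<le> (\<Sum>p\<in>P \<inter> E h. x p)" by simp
next
  have "Budget \<in> cover_rows H P" unfolding cover_rows_def by simp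
  then show "(\<Sum>p\<in>P. x p) \<le> T" using assms(2) by fastforce
qed

lemma cover_rows_certificate:
  assumes "finite H" "finite P" "\<forall>s. 0 \<le> y s"
    and "\<forall>p\<in>P. (\<Sum>s\<in>cover_rows H P. y s * row_coeff E s p) = 0"
  shows "\<forall>p\<in>P. (\<Sum>h\<in>H. if p \<in> E h then y (Edge h) else 0) \<le> y Budget"
    and "(\<Sum>s\<in>cover_rows H P. y s * row_bound w T s) = y Budget * T - (\<Sum>h\<in>H. y (Edge h) * w h)"
proof -
  show "\<forall>p\<in>P. (\<Sum>h\<in>H. if p \<in> E h then y (Edge h) else 0) \<le> y Budget"
  proof
    fix p assume p: "p \<in> P"
    have "(\<Sum>h\<in>H. y (Edge h) * row_coeff E (Edge h) p)
        = - (\<Sum>h\<in>H. if p \<in> E h then y (Edge h) else 0)"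
      unfolding sum_negf[symmetric] by (intro sum.cong) auto
    then have "(\<Sum>s\<in>cover_rows H P. y s * row_coeff E s p)
        = y Budget - (\<Sum>h\<in>H. if p \<in> E h then y (Edge h) else 0) - y (Point p)"
      using assms(1,2) p by (simp add: sum_cover_rows if_distrib cong: if_cong)
    then show "(\<Sum>h\<in>H. if p \<in> E h then y (Edge h) else 0) \<le> y Budget"
      using assms(3,4) p by (metis diff_ge_0_iff_ge eq_iff_diff_eq_0)
  qed
  show "(\<Sum>s\<in>cover_rows H P. y s * row_bound w T s) = y Budget * T - (\<Sum>h\<in>H. y (Edge h) * w h)"
    using assms(1,2) by (simp add: sum_cover_rows sum_negf)
qed

text \<open>Scaling a dual certificate: edge multipliers with total at most \<open>t\<close> at every point
  and weight exceeding \<open>t * T\<close> yield a fractional packing of weight exceeding \<open>T\<close>.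
  (For \<open>t = 0\<close> the multipliers can be scaled up arbitrarily.)\<close>
lemma packing_from_certificate:
  fixes y w :: "'h \<Rightarrow> real"
  assumes "finite H" "\<forall>h. 0 \<le> y h" "0 \<le> t"
    and "\<forall>p\<in>P. (\<Sum>h\<in>H. if p \<in> E h then y h else 0) \<le> t"
    and "t * T < (\<Sum>h\<in>H. y h * w h)"
  shows "\<exists>f. frac_packing E H P f \<and> T < (\<Sum>h\<in>H. f h * w h)"
proof -
  define Y where "Y = (\<Sum>h\<in>H. y h * w h)"
  have scaled: "frac_packing E H P (\<lambda>h. c * y h)" if "0 \<le> c" "c * t \<le> 1" for c
    unfolding frac_packing_def
  proof (intro conjI ballI)
    fix p assume "p \<in> P"
    have "(\<Sum>h\<in>H. if p \<in> E h then c * y h else 0) = c * (\<Sum>h\<in>H. if p \<in> E h then y h else 0)"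
      by (simp add: sum_distrib_left if_distrib cong: if_cong)
    also have "\<dots> \<le> c * t" using assms(4) \<open>p \<in> P\<close> that(1) by (intro mult_left_mono) auto
    finally show "(\<Sum>h\<in>H. if p \<in> E h then c * y h else 0) \<le> 1" using that(2) by linarith
  qed (use assms(2) that(1) in auto)
  have weight: "(\<Sum>h\<in>H. c * y h * w h) = c * Y" for c
    unfolding Y_def by (simp add: sum_distrib_left mult.assoc)
  obtain c where c: "0 \<le> c" "c * t \<le> 1" "T < c * Y"
  proof (cases "t = 0")
    case True
    then have "0 < Y" using assms(5) unfolding Y_def by simp
    then have "T < ((\<bar>T\<bar> + 1) / Y) * Y" by simp
    then show ?thesis using that[of "(\<bar>T\<bar> + 1) / Y"] True \<open>0 < Y\<close> by simp
  next
    case False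
    then have "0 < t" using assms(3) by simp
    then have "T < (1 / t) * Y" using assms(5) unfolding Y_def by (simp add: field_simps)
    then show ?thesis using that[of "1 / t"] \<open>0 < t\<close> by simp
  qed
  show ?thesis using scaled[OF c(1,2)] weight[of c] c(3) by (intro exI[of _ "\<lambda>h. c * y h"]) simp
qed

lemma cover_from_packing_bound:
  fixes w :: "'h \<Rightarrow> real"
  assumes "finite H" "finite P" "\<forall>f. frac_packing E H P f \<longrightarrow> (\<Sum>h\<in>H. f h * w h) \<le> T"
  shows "\<exists>x. (\<forall>p\<in>P. 0 \<le> x p) \<and> (\<forall>h\<in>H. w h \<le> (\<Sum>p\<in>P \<inter> E h. x p)) \<and> (\<Sum>p\<in>P. x p) \<le> T"
proof -
  have "\<exists>x. \<forall>s\<in>cover_rows H P. (\<Sum>p\<in>P. row_coeff E s p * x p) \<le> row_bound w T s"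
  proof (rule ccontr)
    assume "\<not> ?thesis"
    moreover have "finite (cover_rows H P)" using assms(1,2) unfolding cover_rows_def by simp
    ultimately obtain y where y: "\<forall>s. 0 \<le> y s"
      "\<forall>p\<in>P. (\<Sum>s\<in>cover_rows H P. y s * row_coeff E s p) = 0"
      "(\<Sum>s\<in>cover_rows H P. y s * row_bound w T s) < 0"
      using farkas[OF assms(2)] by blast
    note cert = cover_rows_certificate[OF assms(1,2) y(1,2)]
    obtain f where "frac_packing E H P f" "T < (\<Sum>h\<in>H. f h * w h)"
      using packing_from_certificate[OF assms(1), of "\<lambda>h. y (Edge h)" "y Budget" P E T w]
        y(1,3) cert by (auto simp: algebra_simps)
    then show False using assms(3) by fastforce
  qed
  then show ?thesis using cover_rows_solution[OF assms(2)] by blast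
qed

lemma packing_anchor_load:
  fixes f :: "'h \<Rightarrow> real"
  assumes "frac_packing E H P f" "L0 \<subseteq> P" "finite L0" "card L0 \<le> d"
  shows "(\<Sum>h\<in>H. f h * (if \<exists>l\<in>L0. l \<in> E h then 1 else 0)) \<le> real d"
proof -
  have fpos: "\<forall>h\<in>H. 0 \<le> f h" using assms(1) unfolding frac_packing_def by blast
  have "f h * (if \<exists>l\<in>L0. l \<in> E h then 1 else 0) \<le> (\<Sum>l\<in>L0. if l \<in> E h then f h else 0)"
    if h: "h \<in> H" for h
  proof (cases "\<exists>l\<in>L0. l \<in> E h")
    case True
    then obtain l where l: "l \<in> L0" "l \<in> E h" by auto
    have "(if l \<in> E h then f h else 0) \<le> (\<Sum>l\<in>L0. if l \<in> E h then f h else 0)"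
      using assms(3) l fpos h by (intro member_le_sum) auto
    then show ?thesis using l by auto
  qed (use fpos h in \<open>auto intro: sum_nonneg\<close>)
  then have "(\<Sum>h\<in>H. f h * (if \<exists>l\<in>L0. l \<in> E h then 1 else 0))
      \<le> (\<Sum>h\<in>H. \<Sum>l\<in>L0. if l \<in> E h then f h else 0)"
    by (rule sum_mono)
  also have "\<dots> = (\<Sum>l\<in>L0. \<Sum>h\<in>H. if l \<in> E h then f h else 0)" by (rule sum.swap)
  also have "\<dots> \<le> (\<Sum>l\<in>L0. 1)"
    using assms(1,2) unfolding frac_packing_def by (intro sum_mono) auto
  also have "\<dots> \<le> real d" using assms(4) by simp
  finally show ?thesis .
qed

text \<open>Double counting: summing \<open>f h0 * f h\<close> over meeting pairs, each meeting pair is charged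
  to an anchor of one edge lying in the other. The edges through the at most \<open>d\<close> anchors
  of \<open>h0\<close> carry total weight at most \<open>d\<close>, so the whole sum is at most \<open>2 d \<Sum> f\<close>.\<close>
lemma conflict_double_count:
  fixes f :: "'h \<Rightarrow> real"
  assumes "frac_packing E H P f"
    and anchors: "\<forall>h\<in>H. L h \<subseteq> P \<and> finite (L h) \<and> card (L h) \<le> d"
    and cross: "\<forall>h\<in>H. \<forall>h'\<in>H. E h \<inter> E h' \<noteq> {} \<longrightarrow> (\<exists>l\<in>L h. l \<in> E h') \<or> (\<exists>l\<in>L h'. l \<in> E h)"
  shows "(\<Sum>h0\<in>H. f h0 * (\<Sum>h\<in>H. if E h \<inter> E h0 \<noteq> {} then f h else 0))
           \<le> 2 * real d * (\<Sum>h\<in>H. f h)"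
proof -
  have fpos: "\<forall>h\<in>H. 0 \<le> f h" using assms(1) unfolding frac_packing_def by blast
  define A where "A h0 h = (if \<exists>l\<in>L h0. l \<in> E h then 1 else 0::real)" for h0 h
  have charge: "(if E h \<inter> E h0 \<noteq> {} then 1 else 0) \<le> A h0 h + A h h0" if "h \<in> H" "h0 \<in> H" for h h0
    using cross that unfolding A_def by (auto simp: Int_commute)
  have anchor_load: "(\<Sum>h\<in>H. f h * A h0 h) \<le> real d" if "h0 \<in> H" for h0
    using packing_anchor_load[OF assms(1)] anchors that unfolding A_def by auto
  have "(\<Sum>h0\<in>H. f h0 * (\<Sum>h\<in>H. if E h \<inter> E h0 \<noteq> {} then f h else 0))
      = (\<Sum>h0\<in>H. \<Sum>h\<in>H. f h0 * f h * (if E h \<inter> E h0 \<noteq> {} then 1 else 0))"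
    by (simp add: sum_distrib_left if_distrib cong: if_cong)
  also have "\<dots> \<le> (\<Sum>h0\<in>H. \<Sum>h\<in>H. f h0 * f h * (A h0 h + A h h0))"
    using fpos charge by (intro sum_mono mult_left_mono) auto
  also have "\<dots> = (\<Sum>h0\<in>H. \<Sum>h\<in>H. f h0 * f h * A h0 h) + (\<Sum>h0\<in>H. \<Sum>h\<in>H. f h0 * f h * A h h0)"
    by (simp add: distrib_left sum.distrib)
  also have "(\<Sum>h0\<in>H. \<Sum>h\<in>H. f h0 * f h * A h h0) = (\<Sum>h0\<in>H. \<Sum>h\<in>H. f h0 * f h * A h0 h)"
    by (subst sum.swap) (simp add: mult.commute mult.left_commute)
  also have "(\<Sum>h0\<in>H. \<Sum>h\<in>H. f h0 * f h * A h0 h) \<le> (\<Sum>h0\<in>H. f h0 * real d)"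
  proof (rule sum_mono)
    fix h0 assume h0: "h0 \<in> H"
    have "f h0 * (\<Sum>h\<in>H. f h * A h0 h) \<le> f h0 * real d"
      using anchor_load[OF h0] fpos h0 by (intro mult_left_mono) auto
    then show "(\<Sum>h\<in>H. f h0 * f h * A h0 h) \<le> f h0 * real d"
      by (simp add: sum_distrib_left mult.assoc)
  qed
  finally show ?thesis by (simp add: sum_distrib_left sum_distrib_right mult_ac)
qed

text \<open>Averaging: some edge in the support of a nonzero fractional packing meets edges of
  total weight at most \<open>2 d\<close>.\<close>
lemma light_edge_exists:
  fixes f :: "'h \<Rightarrow> real"
  assumes "finite H" "frac_packing E H P f"
    and anchors: "\<forall>h\<in>H. L h \<subseteq> P \<and> finite (L h) \<and> card (L h) \<le> d"
    and cross: "\<forall>h\<in>H. \<forall>h'\<in>H. E h \<inter> E h' \<noteq> {} \<longrightarrow> (\<exists>l\<in>L h. l \<in> E h') \<or> (\<exists>l\<in>L h'. l \<in> E h)"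
    and "0 < (\<Sum>h\<in>H. f h)"
  shows "\<exists>h0\<in>H. 0 < f h0 \<and> (\<Sum>h\<in>H. if E h \<inter> E h0 \<noteq> {} then f h else 0) \<le> 2 * real d"
proof (rule ccontr)
  assume heavy: "\<not> ?thesis"
  define N where "N h0 = (\<Sum>h\<in>H. if E h \<inter> E h0 \<noteq> {} then f h else 0)" for h0
  have fpos: "\<forall>h\<in>H. 0 \<le> f h" using assms(2) unfolding frac_packing_def by blast
  obtain a where a: "a \<in> H" "0 < f a"
  proof (rule ccontr)
    assume "\<not> thesis"
    then have "\<forall>h\<in>H. f h \<le> 0" using that by (meson not_le)
    then have "(\<Sum>h\<in>H. f h) \<le> 0" by (intro sum_nonpos) auto
    then show False using assms(5) by linarith
  qed
  have "(\<Sum>h0\<in>H. f h0 * (2 * real d)) < (\<Sum>h0\<in>H. f h0 * N h0)"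
  proof (rule sum_strict_mono_ex1[OF assms(1)])
    show "\<forall>h\<in>H. f h * (2 * real d) \<le> f h * N h"
    proof
      fix h assume h: "h \<in> H"
      show "f h * (2 * real d) \<le> f h * N h"
      proof (cases "0 < f h")
        case True
        then have "2 * real d \<le> N h" using heavy h unfolding N_def by force
        then show ?thesis using True by (intro mult_left_mono) auto
      qed (use fpos h in auto)
    qed
    show "\<exists>h\<in>H. f h * (2 * real d) < f h * N h"
      using a heavy unfolding N_def by (intro bexI[of _ a]) (auto simp: not_le)
  qed
  then show False
    using conflict_double_count[OF assms(2-4)] unfolding N_def
    by (simp add: sum_distrib_left sum_distrib_right mult_ac)
qed

lemma matching_subset: "matching E H' M \<Longrightarrow> H' \<subseteq> H \<Longrightarrow> matching E H M"
  unfolding matching_def by auto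

text \<open>The part of the weight \<open>w\<close> paid for by the edge \<open>h0\<close> in the local-ratio method:
  \<open>w h0\<close> on every edge meeting \<open>h0\<close> (including \<open>h0\<close> itself), zero elsewhere.\<close>
definition paid_by :: "('h \<Rightarrow> real set) \<Rightarrow> ('h \<Rightarrow> real) \<Rightarrow> 'h \<Rightarrow> 'h \<Rightarrow> real" where
  "paid_by E w h0 h = (if E h \<inter> E h0 \<noteq> {} then w h0 else 0)"

lemma local_ratio_charge:
  fixes f w :: "'h \<Rightarrow> real"
  assumes "finite H" "\<forall>h\<in>H. 0 \<le> f h" "0 \<le> w h0"
    and "(\<Sum>h\<in>H. if E h \<inter> E h0 \<noteq> {} then f h else 0) \<le> 2 * real d"
  shows "(\<Sum>h\<in>H. f h * w h) \<le> 2 * real d * w h0 +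
           (\<Sum>h\<in>{h\<in>H. 0 < w h - paid_by E w h0 h}. f h * (w h - paid_by E w h0 h))"
proof -
  define r where "r h = w h - paid_by E w h0 h" for h
  define H2 where "H2 = {h\<in>H. 0 < r h}"
  have "(\<Sum>h\<in>H. f h * paid_by E w h0 h) = w h0 * (\<Sum>h\<in>H. if E h \<inter> E h0 \<noteq> {} then f h else 0)"
    unfolding paid_by_def by (simp add: sum_distrib_left if_distrib mult.commute cong: if_cong)
  also have "\<dots> \<le> w h0 * (2 * real d)" using assms(3,4) by (intro mult_left_mono) auto
  finally have paid: "(\<Sum>h\<in>H. f h * paid_by E w h0 h) \<le> 2 * real d * w h0" by (simp add: mult_ac)
  have "(\<Sum>h\<in>H - H2. f h * r h) \<le> 0"
    using assms(2) unfolding H2_def by (intro sum_nonpos) (auto simp: mult_nonneg_nonpos)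
  then have rest: "(\<Sum>h\<in>H. f h * r h) \<le> (\<Sum>h\<in>H2. f h * r h)"
    using sum.subset_diff[OF _ assms(1), of H2 "\<lambda>h. f h * r h"] unfolding H2_def by auto
  have "(\<Sum>h\<in>H. f h * w h) = (\<Sum>h\<in>H. f h * paid_by E w h0 h) + (\<Sum>h\<in>H. f h * r h)"
    unfolding r_def by (simp add: right_diff_distrib sum_subtractf)
  then show ?thesis using paid rest unfolding H2_def r_def by linarith
qed

text \<open>Local-ratio step: from a matching \<open>M\<close> one obtains a matching whose \<open>w\<close>-weight is at
  least \<open>w h0\<close> plus the \<open>M\<close>-weight of the remainder \<open>w - paid_by E w h0\<close>: either \<open>M\<close>
  already meets \<open>h0\<close>, or \<open>h0\<close> can be added to it.\<close>
lemma local_ratio_extend: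
  fixes w :: "'h \<Rightarrow> real"
  assumes "finite H" "matching E H M" "h0 \<in> H" "E h0 \<noteq> {}" "0 \<le> w h0"
  shows "\<exists>M'. matching E H M' \<and> w h0 + (\<Sum>h\<in>M. w h - paid_by E w h0 h) \<le> (\<Sum>h\<in>M'. w h)"
proof -
  have finM: "finite M" using assms(1,2) finite_subset unfolding matching_def by blast
  have split: "(\<Sum>h\<in>M. w h - paid_by E w h0 h) = (\<Sum>h\<in>M. w h) - (\<Sum>h\<in>M. paid_by E w h0 h)"
    by (rule sum_subtractf)
  show ?thesis
  proof (cases "\<exists>h1\<in>M. E h1 \<inter> E h0 \<noteq> {}")
    case True
    then obtain h1 where "h1 \<in> M" "E h1 \<inter> E h0 \<noteq> {}" by auto
    then have "w h0 \<le> (\<Sum>h\<in>M. paid_by E w h0 h)"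
      using member_le_sum[of h1 M "paid_by E w h0"] finM assms(5) unfolding paid_by_def by auto
    then show ?thesis using assms(2) split by (intro exI[of _ M]) auto
  next
    case False
    then have "h0 \<notin> M" using assms(4) by auto
    moreover have "matching E H (insert h0 M)"
      using assms(2,3) False unfolding matching_def by (auto simp: Int_commute)
    moreover have "(\<Sum>h\<in>M. paid_by E w h0 h) = 0"
      using False unfolding paid_by_def by simp
    ultimately show ?thesis using finM split by (intro exI[of _ "insert h0 M"]) auto
  qed
qed

text \<open>Induction on the number of edges: pick a light edge \<open>h0\<close>, let it pay for
  \<open>paid_by E w h0\<close>, and recurse on the edges where the remainder is positive.\<close>
lemma local_ratio_matching:
  fixes f w :: "'h \<Rightarrow> real"
  assumes "finite H" "frac_packing E H P f" "\<forall>h\<in>H. 0 \<le> w h"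
    and "\<forall>h\<in>H. L h \<subseteq> P \<and> finite (L h) \<and> card (L h) \<le> d"
    and "\<forall>h\<in>H. \<forall>h'\<in>H. E h \<inter> E h' \<noteq> {} \<longrightarrow> (\<exists>l\<in>L h. l \<in> E h') \<or> (\<exists>l\<in>L h'. l \<in> E h)"
    and "\<forall>h\<in>H. E h \<noteq> {}"
  shows "\<exists>M. matching E H M \<and> (\<Sum>h\<in>H. f h * w h) \<le> 2 * real d * (\<Sum>h\<in>M. w h)"
  using assms
proof (induction "card H" arbitrary: H w rule: less_induct)
  case less
  note fin = less.prems(1) and pack = less.prems(2) and wpos = less.prems(3)
    and anchors = less.prems(4) and cross = less.prems(5) and nonempty = less.prems(6)
  have fpos: "\<forall>h\<in>H. 0 \<le> f h" using pack unfolding frac_packing_def by blast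
  show ?case
  proof (cases "0 < (\<Sum>h\<in>H. f h)")
    case False
    moreover have "0 \<le> (\<Sum>h\<in>H. f h)" using fpos by (intro sum_nonneg) auto
    ultimately have "(\<Sum>h\<in>H. f h) = 0" by linarith
    then have "\<forall>h\<in>H. f h = 0" using fin fpos sum_nonneg_eq_0_iff by blast
    then show ?thesis by (intro exI[of _ "{}"]) (auto simp: matching_def)
  next
    case True
    obtain h0 where h0: "h0 \<in> H" "0 < f h0"
      "(\<Sum>h\<in>H. if E h \<inter> E h0 \<noteq> {} then f h else 0) \<le> 2 * real d"
      using light_edge_exists[OF fin pack anchors cross True] by blast
    define r where "r h = w h - paid_by E w h0 h" for h
    define H2 where "H2 = {h\<in>H. 0 < r h}"
    have sub: "H2 \<subseteq> H" unfolding H2_def by auto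
    have "h0 \<notin> H2" using nonempty h0(1) unfolding H2_def r_def paid_by_def by auto
    then have smaller: "card H2 < card H" using fin sub h0(1) by (intro psubset_card_mono) auto
    have "\<exists>M. matching E H2 M \<and> (\<Sum>h\<in>H2. f h * r h) \<le> 2 * real d * (\<Sum>h\<in>M. r h)"
      by (rule less.hyps[OF smaller finite_subset[OF sub fin] frac_packing_subset[OF pack fin sub]])
        (use sub anchors cross nonempty in \<open>auto simp: H2_def\<close>)
    then obtain M2 where M2: "matching E H2 M2" "(\<Sum>h\<in>H2. f h * r h) \<le> 2 * real d * (\<Sum>h\<in>M2. r h)"
      by blast
    obtain M where M: "matching E H M" "w h0 + (\<Sum>h\<in>M2. r h) \<le> (\<Sum>h\<in>M. w h)"
      using local_ratio_extend[OF fin matching_subset[OF M2(1) sub] h0(1)] nonempty h0(1) wpos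
      unfolding r_def by blast
    have "(\<Sum>h\<in>H. f h * w h) \<le> 2 * real d * w h0 + (\<Sum>h\<in>H2. f h * r h)"
      using local_ratio_charge[OF fin fpos _ h0(3)] wpos h0(1) unfolding H2_def r_def by blast
    also have "\<dots> \<le> 2 * real d * (w h0 + (\<Sum>h\<in>M2. r h))" using M2(2) by (simp add: distrib_left)
    also have "\<dots> \<le> 2 * real d * (\<Sum>h\<in>M. w h)" using M(2) by (intro mult_left_mono) auto
    finally show ?thesis using M(1) by blast
  qed
qed

definition left_anchors :: "real set \<Rightarrow> real set \<Rightarrow> bool" where
  "left_anchors L S \<longleftrightarrow> finite L \<and> (\<forall>x\<in>S. \<exists>l\<in>L. l \<le> x \<and> {l..x} \<subseteq> S)"

text \<open>The crossing property: if two anchored sets meet, one contains an anchor of the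
  other, namely the larger of the anchors below a common point.\<close>
lemma left_anchors_cross:
  assumes "left_anchors L S" "left_anchors L' S'" "S \<inter> S' \<noteq> {}"
  shows "(\<exists>l\<in>L. l \<in> S') \<or> (\<exists>l\<in>L'. l \<in> S)"
proof -
  obtain x where x: "x \<in> S" "x \<in> S'" using assms(3) by auto
  obtain l where l: "l \<in> L" "l \<le> x" "{l..x} \<subseteq> S" using assms(1) x(1) unfolding left_anchors_def by blast
  obtain l' where l': "l' \<in> L'" "l' \<le> x" "{l'..x} \<subseteq> S'"
    using assms(2) x(2) unfolding left_anchors_def by blast
  show ?thesis
  proof (cases "l \<le> l'")
    case True
    then have "l' \<in> S" using l l' by auto
    then show ?thesis using l'(1) by blast
  next
    case False
    then have "l \<in> S'" using l l' by auto
    then show ?thesis using l(1) by blast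
  qed
qed

lemma d_interval_left_anchors:
  assumes "d_interval d S"
  shows "S \<noteq> {} \<and> (\<exists>L. left_anchors L S \<and> card L \<le> d)"
proof -
  obtain ivs :: "(real \<times> real) list" where ivs: "1 \<le> length ivs" "length ivs \<le> d"
    "\<forall>i < length ivs. fst (ivs ! i) \<le> snd (ivs ! i)"
    "S = (\<Union>i < length ivs. {fst (ivs ! i) .. snd (ivs ! i)})"
    using assms unfolding d_interval_def by blast
  define L where "L = (\<lambda>i. fst (ivs ! i)) ` {..<length ivs}"
  have "0 < length ivs" using ivs(1) by linarith
  then have "fst (ivs ! 0) \<in> S" using ivs(3) unfolding ivs(4) by force
  moreover have "card L \<le> d"
    using card_image_le[of "{..<length ivs}" "\<lambda>i. fst (ivs ! i)"] ivs(2) unfolding L_def by simp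
  moreover have "left_anchors L S"
    unfolding left_anchors_def
  proof (intro conjI ballI)
    show "finite L" unfolding L_def by simp
    fix x assume "x \<in> S"
    then obtain i where "i < length ivs" "x \<in> {fst (ivs ! i) .. snd (ivs ! i)}" using ivs(4) by auto
    then show "\<exists>l\<in>L. l \<le> x \<and> {l..x} \<subseteq> S"
      unfolding L_def ivs(4) by (intro bexI[of _ "fst (ivs ! i)"]) auto
  qed
  ultimately show ?thesis by blast
qed

lemma matching_weight_le_nu:
  assumes "finite H" "matching E H M"
  shows "(\<Sum>h\<in>M. real (w h)) \<le> real (nu_w E H w)"
proof -
  have "{M. matching E H M} \<subseteq> Pow H" by (auto simp: matching_def)
  then have "finite {M. matching E H M}" using assms(1) finite_subset by blast
  then have "(\<Sum>h\<in>M. w h) \<le> nu_w E H w" unfolding nu_w_def using assms(2) by (intro Max_ge) auto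
  then show ?thesis by (simp flip: of_nat_sum)
qed

lemma tau_star_le_point_weights:
  assumes "finite P" "\<forall>p\<in>P. 0 \<le> x p" "\<forall>h\<in>H. real (w h) \<le> (\<Sum>p\<in>P \<inter> E h. x p)"
  shows "tau_star_w E H w \<le> (\<Sum>p\<in>P. x p)"
proof -
  define g where "g v = (if v \<in> P then x v else 0)" for v
  have supp: "{v. g v \<noteq> 0} \<subseteq> P" unfolding g_def by auto
  have restrict: "(\<Sum>v\<in>A \<inter> {v. g v \<noteq> 0}. g v) = (\<Sum>v\<in>A \<inter> P. x v)" for A
  proof -
    have "(\<Sum>v\<in>A \<inter> {v. g v \<noteq> 0}. g v) = (\<Sum>v\<in>A \<inter> P. g v)"
      using supp assms(1) by (intro sum.mono_neutral_left) auto
    also have "\<dots> = (\<Sum>v\<in>A \<inter> P. x v)" unfolding g_def by (intro sum.cong) auto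
    finally show ?thesis .
  qed
  have cover: "frac_cover E H w g"
    unfolding frac_cover_def
  proof (intro conjI allI ballI)
    show "finite {v. g v \<noteq> 0}" using supp assms(1) finite_subset by blast
    show "0 \<le> g v" for v using assms(2) unfolding g_def by auto
    show "real (w h) \<le> (\<Sum>v\<in>E h \<inter> {v. g v \<noteq> 0}. g v)" if "h \<in> H" for h
      using assms(3) that restrict[of "E h"] by (simp add: Int_commute)
  qed
  have "(\<Sum>p\<in>P. x p) = (\<Sum>v\<in>{v. g v \<noteq> 0}. g v)" using restrict[of UNIV] by simp
  then have "(\<Sum>p\<in>P. x p) \<in> (\<lambda>g. \<Sum>v\<in>{v. g v \<noteq> 0}. g v) ` {g. frac_cover E H w g}"
    using cover by blast
  moreover have "bdd_below ((\<lambda>g. \<Sum>v\<in>{v. g v \<noteq> 0}. g v) ` {g. frac_cover E H w g})"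
    by (rule bdd_belowI[of _ 0]) (auto simp: frac_cover_def intro: sum_nonneg)
  ultimately show ?thesis unfolding tau_star_w_def by (intro cInf_lower) auto
qed

text \<open>The combinatorial core (the local-ratio bound \<open>\<nu>*\<^sub>w \<le> 2 d \<nu>\<^sub>w\<close>): taking as \<open>P\<close>
  the left endpoints of all edges, every fractional packing w.r.t. \<open>P\<close> has weight at
  most \<open>2 d \<nu>\<^sub>w\<close>.\<close>
lemma d_interval_packing_bound:
  assumes "finite H" "\<forall>h\<in>H. d_interval d (E h)"
  shows "\<exists>P. finite P \<and>
           (\<forall>f. frac_packing E H P f \<longrightarrow> (\<Sum>h\<in>H. f h * real (w h)) \<le> 2 * real d * real (nu_w E H w))"
proof -
  have "\<forall>h\<in>H. \<exists>L. left_anchors L (E h) \<and> card L \<le> d"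
    using d_interval_left_anchors assms(2) by blast
  then obtain L where L: "\<forall>h\<in>H. left_anchors (L h) (E h) \<and> card (L h) \<le> d"
    by metis
  have nonempty: "\<forall>h\<in>H. E h \<noteq> {}" using d_interval_left_anchors assms(2) by blast
  define P where "P = (\<Union>h\<in>H. L h)"
  have anchors: "\<forall>h\<in>H. L h \<subseteq> P \<and> finite (L h) \<and> card (L h) \<le> d"
    using L unfolding P_def left_anchors_def by blast
  have cross: "\<forall>h\<in>H. \<forall>h'\<in>H. E h \<inter> E h' \<noteq> {} \<longrightarrow> (\<exists>l\<in>L h. l \<in> E h') \<or> (\<exists>l\<in>L h'. l \<in> E h)"
    using L left_anchors_cross by blast
  have "(\<Sum>h\<in>H. f h * real (w h)) \<le> 2 * real d * real (nu_w E H w)" if pack: "frac_packing E H P f" for f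
  proof -
    obtain M where M: "matching E H M"
      "(\<Sum>h\<in>H. f h * real (w h)) \<le> 2 * real d * (\<Sum>h\<in>M. real (w h))"
      using local_ratio_matching[OF assms(1) pack _ anchors cross nonempty, of "\<lambda>h. real (w h)"]
      by auto
    have "2 * real d * (\<Sum>h\<in>M. real (w h)) \<le> 2 * real d * real (nu_w E H w)"
      using matching_weight_le_nu[OF assms(1) M(1)] by (intro mult_left_mono) auto
    then show ?thesis using M(2) by linarith
  qed
  moreover have "finite P" using anchors assms(1) unfolding P_def by blast
  ultimately show ?thesis by blast
qed

theorem theorem1p8:
  fixes d :: nat and H :: "'h set" and E :: "'h \<Rightarrow> real set" and w :: "'h \<Rightarrow> nat"
  assumes "d \<ge> 1"
    and "finite H"
    and "\<forall>h\<in>H. d_interval d (E h)"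
  shows "tau_star_w E H w \<le> 2 * real d * real (nu_w E H w)"
proof -
  obtain P where P: "finite P"
    "\<forall>f. frac_packing E H P f \<longrightarrow> (\<Sum>h\<in>H. f h * real (w h)) \<le> 2 * real d * real (nu_w E H w)"
    using d_interval_packing_bound[OF assms(2,3)] by blast
  obtain x where "\<forall>p\<in>P. 0 \<le> x p" "\<forall>h\<in>H. real (w h) \<le> (\<Sum>p\<in>P \<inter> E h. x p)"
    "(\<Sum>p\<in>P. x p) \<le> 2 * real d * real (nu_w E H w)"
    using cover_from_packing_bound[OF assms(2) P] by blast
  then show ?thesis using tau_star_le_point_weights[OF P(1)] by fastforce
qed

end
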